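(* Let $\Sigma$ be a mirror curve of a toric Calabi-Yau threefold, written in the form $1+x+y+\sum_{i=1}^k r_i x^{m_i}y^{n_i}=0$ in $(\mathbb{C}^* )^2$ for some integers $m_i,n_i$ and parameters $r_i$, and for an integer $f$ let $\Sigma_f$ be the framed curve $1+XY^{-f}+Y+\sum_{i=1}^k r_i (XY^{-f})^{m_i}Y^{n_i}=0$ in $(\mathbb{C}^* )^2$. Then there are at most finitely many values of $f$ for which the map $X:\Sigma_f\to\mathbb{C}^*$ fails to be a branched covering; i.e. for generic framing $f$, $X:\Sigma_f\to\mathbb{C}^*$ is a branched covering. *)

theory Defs
  imports "HOL-Analysis.Analysis"
begin

text \<open>Branched covering (topological version, as for maps between Riemann surfaces):
  a continuous, surjective, proper map with finite fibres which is an (unbranched)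
  covering map away from a discrete, closed branch locus D in the base.\<close>
definition branched_covering ::
  "('a::topological_space) set \<Rightarrow> ('a \<Rightarrow> 'b::topological_space) \<Rightarrow> 'b set \<Rightarrow> bool" where
  "branched_covering S p T \<longleftrightarrow>
     continuous_on S p \<and> p ` S = T \<and>
     (\<forall>K. K \<subseteq> T \<and> compact K \<longrightarrow> compact {z\<in>S. p z \<in> K}) \<and>
     (\<forall>t\<in>T. finite {z\<in>S. p z = t}) \<and>
     (\<exists>D. D \<subseteq> T \<and> D sparse_in T \<and> covering_space (S - p -` D) p (T - D))"

definition mirror_exponents :: "nat \<Rightarrow> (nat \<Rightarrow> int) \<Rightarrow> (nat \<Rightarrow> int) \<Rightarrow> (int \<times> int) set" where
  "mirror_exponents k m n = {(0,0),(1,0),(0,1)} \<union> (\<lambda>i. (m i, n i)) ` {1..k}"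

text \<open>Mirror curve of a toric CY3: the monomials are exactly the lattice points of
  the (toric diagram) convex lattice polygon they span, each appearing once.\<close>
definition toric_mirror_data :: "nat \<Rightarrow> (nat \<Rightarrow> int) \<Rightarrow> (nat \<Rightarrow> int) \<Rightarrow> bool" where
  "toric_mirror_data k m n \<longleftrightarrow>
     inj_on (\<lambda>i. (m i, n i)) {1..k} \<and>
     (\<forall>i\<in>{1..k}. (m i, n i) \<notin> {(0,0),(1,0),(0,1)}) \<and>
     mirror_exponents k m n =
       {(a,b). (real_of_int a, real_of_int b) \<in>
          convex hull ((\<lambda>(a,b). (real_of_int a, real_of_int b)) ` mirror_exponents k m n)}"

definition framed_curve ::
  "nat \<Rightarrow> (nat \<Rightarrow> int) \<Rightarrow> (nat \<Rightarrow> int) \<Rightarrow> (nat \<Rightarrow> complex) \<Rightarrow> int \<Rightarrow> (complex \<times> complex) set" where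
  "framed_curve k m n r f =
     {(X, Y). X \<noteq> 0 \<and> Y \<noteq> 0 \<and>
        1 + X * Y powi (-f) + Y + (\<Sum>i=1..k. r i * (X * Y powi (-f)) powi (m i) * Y powi (n i)) = 0}"

end

theory Submission
  imports
    Defs
    "HOL-Computational_Algebra.Field_as_Ring"
    "HOL-Computational_Algebra.Fundamental_Theorem_Algebra"
    "Subresultants.Subresultant_Gcd"
begin

text \<open>
  Framing \<open>x = X Y\<^bsup>-f\<^esup>\<close> sends the monomial \<open>x\<^sup>a y\<^sup>b\<close> of the mirror curve to \<open>X\<^sup>a Y\<^bsup>b - f a\<^esup>\<close>.
  Unless \<open>f\<close> is one of the finitely many slopes \<open>(b - b') / (a - a')\<close> between exponents
  of the curve, the sheared \<open>Y\<close>-exponents \<open>b - f a\<close> are pairwise distinct. Clearing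
  denominators then turns \<open>\<Sigma>\<^sub>f\<close> into the zero set in \<open>(\<complex>\<^sup>*)\<^sup>2\<close> of a polynomial \<open>P(X)(Y)\<close>
  of positive degree in \<open>Y\<close> whose \<open>Y\<close>-coefficients are single monomials in \<open>X\<close>; in
  particular its leading and constant coefficients never vanish on \<open>\<complex>\<^sup>*\<close>.

  The bulk of the file proves that for every such \<open>P\<close> the projection to \<open>X\<close> is a
  branched covering of \<open>\<complex>\<^sup>*\<close>: fibres are root sets of the slices \<open>P(x)\<close>, hence finite;
  Cauchy's root bounds confine the curve over a compact set to an annulus in \<open>Y\<close>, which
  gives properness; and away from the finitely many zeros of
  \<open>Res(R, R') \<cdot> lc(R) \<cdot> lc(R')\<close>, with \<open>R\<close> the squarefree part of \<open>P\<close>, all roots are simple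
  and move continuously, so the curve is locally a disjoint union of graphs, i.e. a
  covering.
\<close>

text \<open>A bivariate polynomial is viewed as a polynomial in \<open>y\<close> whose coefficients are
  polynomials in \<open>x\<close>.\<close>
definition slice :: "'a::idom \<Rightarrow> 'a poly poly \<Rightarrow> 'a poly" where
  "slice x P = map_poly (\<lambda>c. poly c x) P"

interpretation slice_hom: map_poly_idom_hom "\<lambda>c::'a::idom poly. poly c x" ..

lemma coeff_slice [simp]: "coeff (slice x P) i = poly (coeff P i) x"
  by (simp add: slice_def coeff_map_poly)

lemma degree_slice_le: "degree (slice x P) \<le> degree P"
  unfolding slice_def by (rule degree_map_poly_le)

lemma degree_slice: "poly (lead_coeff P) x \<noteq> 0 \<Longrightarrow> degree (slice x P) = degree P"
  by (metis coeff_slice degree_slice_le le_antisym le_degree)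

lemma lead_coeff_slice: "poly (lead_coeff P) x \<noteq> 0 \<Longrightarrow> lead_coeff (slice x P) = poly (lead_coeff P) x"
  by (simp add: degree_slice)

lemma slice_nonzero: "poly (lead_coeff P) x \<noteq> 0 \<Longrightarrow> slice x P \<noteq> 0"
  using lead_coeff_slice by fastforce

lemma slice_mult: "slice x (P * Q) = slice x P * slice x Q"
  unfolding slice_def by (rule slice_hom.hom_mult)

lemma slice_pderiv: "slice x (pderiv P) = pderiv (slice x P)"
  unfolding slice_def by (rule poly_hom.map_poly_pderiv)

lemma slice_monom: "slice x (monom c i) = monom (poly c x) i"
  by (rule poly_eqI) (simp add: coeff_monom)

lemma slice_sum: "slice x (sum F A) = (\<Sum>a\<in>A. slice x (F a))"
  unfolding slice_def by (rule slice_hom.hom_sum)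

lemma slice_one [simp]: "slice x 1 = 1"
  by (simp add: slice_def)

lemma poly_slice_prod_mset: "poly (slice x (prod_mset M)) y = (\<Prod>p\<in>#M. poly (slice x p) y)"
  by (induction M) (simp_all add: slice_mult)

lemma poly_slice_sum: "poly (slice x P) y = (\<Sum>i\<le>degree P. poly (coeff P i) x * y ^ i)"
proof -
  have "poly (slice x P) y = (\<Sum>i\<le>degree (slice x P). coeff (slice x P) i * y ^ i)"
    by (rule poly_altdef)
  also have "\<dots> = (\<Sum>i\<le>degree P. coeff (slice x P) i * y ^ i)"
    by (rule sum.mono_neutral_left) (auto intro: degree_slice_le simp: le_degree)
  finally show ?thesis by simp
qed

lemma continuous_on_poly_slice:
  "continuous_on A (\<lambda>z. poly (slice (fst z) P) (snd z :: 'a::real_normed_field))"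
  unfolding poly_slice_sum by (intro continuous_intros)

text \<open>If a complex polynomial is small at \<open>z\<close> compared to its leading coefficient, it has a
  root near \<open>z\<close>: write \<open>p = c \<Prod>(y - \<rho>\<^sub>i)\<close>; if every root were at distance \<open>\<ge> e\<close> from
  \<open>z\<close>, then \<open>\<bar>p(z)\<bar> \<ge> \<bar>c\<bar> e\<^sup>n\<close>.\<close>
lemma root_near_small_value:
  fixes p :: "complex poly"
  assumes small: "norm (poly p z) < norm (lead_coeff p) * e ^ degree p" and e: "e > 0"
  obtains w where "dist w z < e" "poly p w = 0"
proof -
  define n where "n = degree p"
  obtain \<rho> where \<rho>: "Polynomial.smult (lead_coeff p) (\<Prod>i<n. [:-\<rho> i, 1:]) = p"
    unfolding n_def by (rule complex_poly_decompose')
  have poly_p: "poly p w = lead_coeff p * (\<Prod>i<n. w - \<rho> i)" for w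
    by (subst \<rho>[symmetric]) (simp add: poly_prod)
  have "\<exists>w. dist w z < e \<and> poly p w = 0"
  proof (rule ccontr)
    assume no_root: "\<nexists>w. dist w z < e \<and> poly p w = 0"
    have far: "e \<le> norm (z - \<rho> i)" if "i < n" for i
    proof -
      have "poly p (\<rho> i) = 0" using that by (simp add: poly_p) blast
      then have "\<not> dist (\<rho> i) z < e" using no_root by blast
      then show ?thesis by (simp add: dist_norm norm_minus_commute)
    qed
    have "norm (lead_coeff p) * e ^ n \<le> norm (lead_coeff p) * (\<Prod>i<n. norm (z - \<rho> i))"
      using far e by (intro mult_left_mono prod_mono[of "{..<n}" "\<lambda>_. e", simplified]) auto
    also have "\<dots> = norm (poly p z)" by (simp add: poly_p norm_mult prod_norm)
    finally show False using small by (simp add: n_def)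
  qed
  then show thesis using that by blast
qed

lemma roots_continuous:
  fixes Q :: "complex poly poly"
  assumes lc: "poly (lead_coeff Q) x0 \<noteq> 0" and root: "poly (slice x0 Q) z = 0" and e: "e > 0"
  shows "\<forall>\<^sub>F x in nhds x0. \<exists>w. dist w z < e \<and> poly (slice x Q) w = 0"
proof -
  define n where "n = degree Q"
  define L where "L = norm (poly (lead_coeff Q) x0)"
  have L: "L > 0" using lc by (simp add: L_def)
  have "isCont (\<lambda>x. norm (poly (lead_coeff Q) x)) x0" by (intro continuous_intros)
  then have "((\<lambda>x. norm (poly (lead_coeff Q) x)) \<longlongrightarrow> L) (nhds x0)"
    unfolding isCont_def L_def by (rule tendsto_at_iff_tendsto_nhds[THEN iffD1])
  then have "\<forall>\<^sub>F x in nhds x0. L / 2 < norm (poly (lead_coeff Q) x)"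
    using L by (intro order_tendstoD) auto
  moreover have "isCont (\<lambda>x. norm (poly (slice x Q) z)) x0"
    unfolding poly_slice_sum by (intro continuous_intros)
  then have "((\<lambda>x. norm (poly (slice x Q) z)) \<longlongrightarrow> norm (poly (slice x0 Q) z)) (nhds x0)"
    unfolding isCont_def by (rule tendsto_at_iff_tendsto_nhds[THEN iffD1])
  then have "((\<lambda>x. norm (poly (slice x Q) z)) \<longlongrightarrow> 0) (nhds x0)"
    using root by simp
  then have "\<forall>\<^sub>F x in nhds x0. norm (poly (slice x Q) z) < L / 2 * e ^ n"
    using L e by (intro order_tendstoD) auto
  ultimately show ?thesis
  proof eventually_elim
    case (elim x)
    then have lc_x: "poly (lead_coeff Q) x \<noteq> 0" using L by auto
    have "L / 2 * e ^ n < norm (poly (lead_coeff Q) x) * e ^ n"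
      using elim e by (intro mult_strict_right_mono) auto
    then have "norm (poly (slice x Q) z) < norm (lead_coeff (slice x Q)) * e ^ degree (slice x Q)"
      using elim by (simp add: lead_coeff_slice[OF lc_x] degree_slice[OF lc_x] n_def)
    then obtain w where "dist w z < e" "poly (slice x Q) w = 0"
      using e by (rule root_near_small_value)
    then show ?case by blast
  qed
qed

lemma rsquarefree_if_resultant_pderiv:
  fixes p :: "complex poly"
  assumes res: "resultant p (pderiv p) \<noteq> 0" and p: "p \<noteq> 0"
  shows "rsquarefree p"
  unfolding rsquarefree_roots
proof (intro allI notI)
  fix a assume "poly p a = 0 \<and> poly (pderiv p) a = 0"
  then have "[:-a, 1:] dvd gcd p (pderiv p)" by (simp add: poly_eq_0_iff_dvd)
  then have "degree [:-a, 1:] \<le> degree (gcd p (pderiv p))"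
    using p by (intro dvd_imp_degree_le) auto
  moreover have "degree (gcd p (pderiv p)) = 0" using res by (simp add: resultant_0_gcd)
  ultimately show False by simp
qed

lemma card_roots_rsquarefree:
  fixes p :: "complex poly"
  assumes "rsquarefree p"
  shows "card {z. poly p z = 0} = degree p"
proof -
  have p: "p \<noteq> 0" using assms by (simp add: rsquarefree_def)
  have "degree p = degree (Polynomial.smult (lead_coeff p) (\<Prod>z|poly p z = 0. [:-z, 1:]))"
    using complex_poly_decompose_rsquarefree[OF assms] by simp
  also have "\<dots> = (\<Sum>z|poly p z = 0. degree [:-z, 1:])"
    using p by (simp add: degree_prod_sum_eq)
  finally show ?thesis by simp
qed

lemma card_roots_slice:
  fixes R :: "complex poly poly"
  assumes res: "poly (resultant R (pderiv R)) x \<noteq> 0"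
    and lc: "poly (lead_coeff R) x \<noteq> 0" and lc': "poly (lead_coeff (pderiv R)) x \<noteq> 0"
  shows "card {y. poly (slice x R) y = 0} = degree R"
proof -
  have "resultant (slice x R) (slice x (pderiv R)) = poly (resultant R (pderiv R)) x"
    using poly_hom.resultant_map_poly[of x R "pderiv R"] degree_slice[OF lc] degree_slice[OF lc']
    by (simp add: slice_def)
  then have "resultant (slice x R) (pderiv (slice x R)) \<noteq> 0"
    using res by (simp add: slice_pderiv)
  then have "rsquarefree (slice x R)"
    using slice_nonzero[OF lc] by (rule rsquarefree_if_resultant_pderiv)
  then show ?thesis by (simp add: card_roots_rsquarefree degree_slice[OF lc])
qed

lemma root_norm_upper:
  fixes p :: "complex poly"
  assumes root: "poly p y = 0" and lc: "lead_coeff p \<noteq> 0" and y: "norm y \<ge> 1"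
  shows "norm (lead_coeff p) * norm y \<le> (\<Sum>i<degree p. norm (coeff p i))"
proof (cases "degree p")
  case 0
  then have "poly p y = lead_coeff p" by (metis degree_0_id poly_const_conv)
  then show ?thesis using root lc by simp
next
  case (Suc m)
  define n where "n = degree p"
  have "poly p y = (\<Sum>i<n. coeff p i * y ^ i) + lead_coeff p * y ^ n"
    using poly_altdef[of p y] by (simp add: n_def lessThan_Suc_atMost[symmetric])
  then have top: "lead_coeff p * y ^ n = - (\<Sum>i<n. coeff p i * y ^ i)"
    using root by (simp add: add_eq_0_iff)
  have "norm (lead_coeff p) * norm y ^ n = norm (\<Sum>i<n. coeff p i * y ^ i)"
    using arg_cong[OF top, of norm] by (simp add: norm_mult norm_power)
  also have "\<dots> \<le> (\<Sum>i<n. norm (coeff p i) * norm y ^ m)"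
  proof (rule order_trans[OF norm_sum sum_mono])
    fix i assume "i \<in> {..<n}"
    then have "norm y ^ i \<le> norm y ^ m" using Suc y by (intro power_increasing) (auto simp: n_def)
    then show "norm (coeff p i * y ^ i) \<le> norm (coeff p i) * norm y ^ m"
      by (simp add: norm_mult norm_power mult_left_mono)
  qed
  also have "\<dots> = (\<Sum>i<n. norm (coeff p i)) * norm y ^ m" by (simp add: sum_distrib_right)
  finally have "(norm (lead_coeff p) * norm y) * norm y ^ m \<le> (\<Sum>i<n. norm (coeff p i)) * norm y ^ m"
    using Suc by (simp add: n_def mult_ac)
  moreover have "norm y ^ m > 0" using y by (intro zero_less_power) linarith
  ultimately show ?thesis by (simp add: n_def)
qed

lemma root_norm_lower:
  fixes p :: "complex poly"
  assumes root: "poly p y = 0" and y: "norm y \<le> 1"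
  shows "norm (coeff p 0) \<le> norm y * (\<Sum>i\<le>degree p. norm (coeff p i))"
proof -
  define n where "n = degree p"
  have "poly p y = coeff p 0 + (\<Sum>i\<in>{1..n}. coeff p i * y ^ i)"
    using poly_altdef[of p y] by (simp add: n_def atMost_atLeast0 sum.atLeast_Suc_atMost)
  then have "norm (coeff p 0) = norm (\<Sum>i\<in>{1..n}. coeff p i * y ^ i)"
    using root by (simp add: add_eq_0_iff)
  also have "\<dots> \<le> (\<Sum>i\<in>{1..n}. norm (coeff p i) * norm y)"
  proof (rule order_trans[OF norm_sum sum_mono])
    fix i assume "i \<in> {1..n}"
    then have "norm y ^ i \<le> norm y ^ 1" using y by (intro power_decreasing) auto
    then show "norm (coeff p i * y ^ i) \<le> norm (coeff p i) * norm y"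
      by (simp add: norm_mult norm_power mult_left_mono)
  qed
  also have "\<dots> \<le> (\<Sum>i\<le>n. norm (coeff p i) * norm y)" by (rule sum_mono2) auto
  finally show ?thesis by (simp add: n_def sum_distrib_left mult_ac)
qed

lemma roots_in_annulus:
  fixes p :: "complex poly"
  assumes p: "p \<noteq> 0" and root: "poly p y = 0"
  defines "s \<equiv> \<Sum>i\<le>degree p. norm (coeff p i)"
  shows "min 1 (norm (coeff p 0) / s) \<le> norm y \<and> norm y \<le> max 1 (s / norm (lead_coeff p))"
proof
  have lc: "lead_coeff p \<noteq> 0" using p by simp
  have "norm (lead_coeff p) \<le> s" unfolding s_def by (rule member_le_sum) auto
  then have s_pos: "s > 0" using lc by (meson less_le_trans zero_less_norm_iff)
  show "min 1 (norm (coeff p 0) / s) \<le> norm y"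
  proof (cases "norm y \<le> 1")
    case True
    then have "norm (coeff p 0) / s \<le> norm y"
      using root_norm_lower[OF root True] s_pos by (simp add: s_def divide_le_eq mult.commute)
    then show ?thesis by simp
  qed simp
  show "norm y \<le> max 1 (s / norm (lead_coeff p))"
  proof (cases "norm y \<ge> 1")
    case True
    have "norm (lead_coeff p) * norm y \<le> (\<Sum>i<degree p. norm (coeff p i))"
      by (rule root_norm_upper[OF root lc True])
    also have "\<dots> \<le> s" unfolding s_def by (rule sum_mono2) auto
    finally have "norm y \<le> s / norm (lead_coeff p)" using lc by (simp add: le_divide_eq mult.commute)
    then show ?thesis by simp
  qed simp
qed

text \<open>Uniform version: over a compact set of \<open>x\<close> on which the leading and constant
  coefficients of \<open>P\<close> do not vanish, the radii of the annuli for the slices depend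
  continuously on \<open>x\<close>, so all roots stay in one annulus \<open>\<eta> \<le> \<bar>y\<bar> \<le> M\<close>. This is what makes
  the projection proper.\<close>
lemma slice_roots_in_annulus:
  fixes P :: "complex poly poly"
  assumes K: "compact K"
    and lc: "\<And>x. x \<in> K \<Longrightarrow> poly (lead_coeff P) x \<noteq> 0"
    and c0: "\<And>x. x \<in> K \<Longrightarrow> poly (coeff P 0) x \<noteq> 0"
  obtains \<eta> M where "\<eta> > 0" "\<And>x y. x \<in> K \<Longrightarrow> poly (slice x P) y = 0 \<Longrightarrow> \<eta> \<le> norm y \<and> norm y \<le> M"
proof (cases "K = {}")
  case True
  then show thesis using that[of 1 0] by simp
next
  case False
  define s where "s x = (\<Sum>i\<le>degree P. norm (poly (coeff P i) x))" for x
  define lo where "lo x = min 1 (norm (poly (coeff P 0) x) / s x)" for x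
  define hi where "hi x = max 1 (s x / norm (poly (lead_coeff P) x))" for x
  have s_pos: "s x > 0" if "x \<in> K" for x
  proof -
    have "norm (poly (lead_coeff P) x) \<le> s x" unfolding s_def by (rule member_le_sum) auto
    then show ?thesis using lc[OF that] by (meson less_le_trans zero_less_norm_iff)
  qed
  have cont_s: "continuous_on K s" unfolding s_def by (intro continuous_intros)
  have "continuous_on K lo" unfolding lo_def
    by (intro continuous_intros cont_s) (use s_pos in fastforce)
  then obtain a where a: "a \<in> K" "\<And>x. x \<in> K \<Longrightarrow> lo a \<le> lo x"
    using continuous_attains_inf[OF K False] by blast
  have "continuous_on K hi" unfolding hi_def
    by (intro continuous_intros cont_s) (use lc in fastforce)
  then obtain b where b: "b \<in> K" "\<And>x. x \<in> K \<Longrightarrow> hi x \<le> hi b"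
    using continuous_attains_sup[OF K False] by blast
  have bounds: "lo x \<le> norm y \<and> norm y \<le> hi x" if x: "x \<in> K" and root: "poly (slice x P) y = 0" for x y
    using roots_in_annulus[OF slice_nonzero[OF lc[OF x]] root]
    by (simp add: lo_def hi_def s_def degree_slice[OF lc[OF x]] lead_coeff_slice[OF lc[OF x]])
  have "lo a > 0" using c0[OF a(1)] s_pos[OF a(1)] by (simp add: lo_def)
  then show thesis using that[of "lo a" "hi b"] bounds a b by force
qed

lemma degree_prod_mset_const:
  fixes M :: "'a::idom poly multiset"
  shows "(\<And>p. p \<in># M \<Longrightarrow> degree p = 0) \<Longrightarrow> degree (prod_mset M) = 0"
proof (induction M)
  case (add p M)
  then show ?case using degree_mult_le[of p "prod_mset M"] by simp
qed simp

lemma dvd_prod_prime_factorization: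
  fixes P :: "'a::{factorial_ring_gcd,semiring_gcd_mult_normalize} poly"
  assumes "P \<noteq> 0"
  shows "P dvd prod_mset (prime_factorization P)"
  using prod_mset_prime_factorization_weak[OF assms] by (metis dvd_normalize_iff dvd_refl)

lemma prod_prime_factorization_dvd:
  fixes P :: "'a::{factorial_ring_gcd,semiring_gcd_mult_normalize} poly"
  assumes "P \<noteq> 0"
  shows "prod_mset (prime_factorization P) dvd P"
  using prod_mset_prime_factorization_weak[OF assms] by (metis normalize_dvd_iff dvd_refl)

lemma prime_factor_of_positive_degree:
  fixes g :: "'a::{factorial_ring_gcd,semiring_gcd_mult_normalize} poly"
  assumes deg: "degree g > 0"
  shows "\<exists>q\<in>#prime_factorization g. degree q > 0"
proof (rule ccontr)
  assume "\<not> ?thesis"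
  then have "degree (prod_mset (prime_factorization g)) = 0"
    by (intro degree_prod_mset_const) auto
  moreover have g: "g \<noteq> 0" using deg by auto
  then have "prod_mset (prime_factorization g) \<noteq> 0"
    by (metis normalize_eq_0_iff prod_mset_prime_factorization_weak)
  then have "degree g \<le> degree (prod_mset (prime_factorization g))"
    by (intro dvd_imp_degree_le dvd_prod_prime_factorization g)
  ultimately show False using deg by simp
qed

text \<open>The squarefree part (radical) of \<open>P\<close>: the product of its distinct prime factors of
  positive degree. It has the same roots as \<open>P\<close> but is separable.\<close>
definition nonconst_prime_factors :: "'a::{factorial_ring_gcd,semiring_gcd_mult_normalize} poly \<Rightarrow> 'a poly set" where
  "nonconst_prime_factors P = {p. p \<in># prime_factorization P \<and> degree p > 0}"

definition squarefree_part :: "'a::{factorial_ring_gcd,semiring_gcd_mult_normalize} poly \<Rightarrow> 'a poly" where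
  "squarefree_part P = \<Prod>(nonconst_prime_factors P)"

lemma finite_nonconst_prime_factors: "finite (nonconst_prime_factors P)"
  unfolding nonconst_prime_factors_def
  by (rule finite_subset[of _ "set_mset (prime_factorization P)"]) auto

lemma prime_nonconst_prime_factors: "p \<in> nonconst_prime_factors P \<Longrightarrow> prime p"
  by (simp add: nonconst_prime_factors_def in_prime_factors_iff)

lemma squarefree_part_dvd: "squarefree_part P dvd P"
proof (cases "P = 0")
  case False
  have "mset_set (nonconst_prime_factors P) \<subseteq># prime_factorization P"
    using finite_nonconst_prime_factors
    by (auto simp: subseteq_mset_def count_mset_set' nonconst_prime_factors_def)
  then have "squarefree_part P dvd prod_mset (prime_factorization P)"
    by (simp add: squarefree_part_def prod_unfold_prod_mset prod_mset_subset_imp_dvd)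
  also have "\<dots> dvd P" by (rule prod_prime_factorization_dvd[OF False])
  finally show ?thesis .
qed simp

lemma degree_squarefree_part:
  assumes "degree P > 0"
  shows "degree (squarefree_part P) > 0"
proof -
  obtain p where p: "p \<in> nonconst_prime_factors P"
    using prime_factor_of_positive_degree[OF assms] by (auto simp: nonconst_prime_factors_def)
  have nonzero: "0 \<notin> nonconst_prime_factors P"
    using prime_nonconst_prime_factors not_prime_0 by blast
  have "degree p \<le> (\<Sum>q\<in>nonconst_prime_factors P. degree q)"
    using p finite_nonconst_prime_factors by (intro member_le_sum) auto
  also have "\<dots> = degree (squarefree_part P)"
    unfolding squarefree_part_def using nonzero by (intro degree_prod_sum_eq[symmetric]) auto
  finally show ?thesis using p by (simp add: nonconst_prime_factors_def)
qed

lemma prime_not_dvd_pderiv: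
  fixes p :: "'a::{factorial_ring_gcd,semiring_gcd_mult_normalize,semiring_char_0} poly"
  assumes "degree p > 0"
  shows "\<not> p dvd pderiv p"
proof
  assume "p dvd pderiv p"
  moreover have "pderiv p \<noteq> 0" using assms by (simp add: pderiv_eq_0_iff)
  ultimately have "degree p \<le> degree (pderiv p)" by (rule dvd_imp_degree_le)
  then show False using assms by (simp add: degree_pderiv)
qed

text \<open>If a member \<open>p\<close> of a finite set \<open>F\<close> of primes divides \<open>(\<Prod>F)'\<close>, then \<open>p\<close> divides
  \<open>p'\<close>: by the product rule all other summands are multiples of \<open>p\<close>.\<close>
lemma prime_dvd_pderiv_prod:
  fixes F :: "'a::{factorial_ring_gcd,semiring_gcd_mult_normalize} poly set"
  assumes F: "finite F" "\<And>q. q \<in> F \<Longrightarrow> prime q" and p: "p \<in> F"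
    and dvd: "p dvd pderiv (\<Prod>F)"
  shows "p dvd pderiv p"
proof -
  have "pderiv (\<Prod>F) = \<Prod>(F - {p}) * pderiv p + (\<Sum>a\<in>F - {p}. \<Prod>(F - {a}) * pderiv a)"
    using pderiv_prod[of id F] F p by (simp add: sum.remove)
  moreover have "p dvd (\<Sum>a\<in>F - {p}. \<Prod>(F - {a}) * pderiv a)"
    using F p by (intro dvd_sum dvd_mult2 dvd_prodI) auto
  ultimately have "p dvd \<Prod>(F - {p}) * pderiv p"
    using dvd by (simp add: dvd_add_left_iff)
  moreover have "\<not> p dvd \<Prod>(F - {p})"
  proof
    assume "p dvd \<Prod>(F - {p})"
    then obtain a where "a \<in> F - {p}" "p dvd a"
      using prime_dvd_prod_iff[of "F - {p}" p id] F p by auto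
    then show False using primes_dvd_imp_eq[of p a] F p by auto
  qed
  ultimately show ?thesis using F p by (simp add: prime_dvd_mult_iff)
qed

lemma squarefree_part_separable:
  fixes P :: "'a::{factorial_ring_gcd,semiring_gcd_mult_normalize,semiring_char_0} poly"
  defines "R \<equiv> squarefree_part P"
  shows "degree (gcd R (pderiv R)) = 0"
proof (rule ccontr)
  define F where "F = nonconst_prime_factors P"
  have F: "finite F" "\<And>a. a \<in> F \<Longrightarrow> prime a"
    unfolding F_def by (simp_all add: finite_nonconst_prime_factors prime_nonconst_prime_factors)
  assume "degree (gcd R (pderiv R)) \<noteq> 0"
  then obtain q where q: "q \<in># prime_factorization (gcd R (pderiv R))" "degree q > 0"
    using prime_factor_of_positive_degree by blast
  then have "prime q" "q dvd gcd R (pderiv R)"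
    by (auto simp: in_prime_factors_iff)
  then have dvd_R: "q dvd \<Prod>F" and dvd_R': "q dvd pderiv (\<Prod>F)"
    using dvd_trans by (auto simp: R_def F_def squarefree_part_def)
  obtain a where "a \<in> F" "q dvd a"
    using prime_dvd_prod_iff[of F q id] \<open>prime q\<close> dvd_R F by auto
  then have "q \<in> F" using primes_dvd_imp_eq[OF \<open>prime q\<close> F(2)] by auto
  then have "q dvd pderiv q" using prime_dvd_pderiv_prod[OF F _ dvd_R'] by simp
  then show False using prime_not_dvd_pderiv[OF q(2)] by simp
qed

lemma slice_root_dvd:
  assumes "p dvd P" "poly (slice x p) y = 0"
  shows "poly (slice x P) y = 0"
proof -
  obtain H where "P = p * H" using assms(1) by (elim dvdE)
  then show ?thesis using assms(2) by (simp add: slice_mult)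
qed

lemma roots_slice_squarefree_part:
  fixes P :: "'a::{factorial_ring_gcd,semiring_gcd_mult_normalize} poly poly"
  assumes nonzero: "slice x P \<noteq> 0"
  shows "poly (slice x P) y = 0 \<longleftrightarrow> poly (slice x (squarefree_part P)) y = 0"
proof
  assume "poly (slice x (squarefree_part P)) y = 0"
  then show "poly (slice x P) y = 0" by (rule slice_root_dvd[OF squarefree_part_dvd])
next
  assume root: "poly (slice x P) y = 0"
  have "P \<noteq> 0" using nonzero by (auto simp: slice_def)
  then have "poly (slice x (prod_mset (prime_factorization P))) y = 0"
    using root by (intro slice_root_dvd[OF dvd_prod_prime_factorization])
  then obtain p where p: "p \<in># prime_factorization P" and p_root: "poly (slice x p) y = 0"
    by (auto simp: poly_slice_prod_mset prod_mset_zero_iff)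
  show "poly (slice x (squarefree_part P)) y = 0"
  proof (cases "degree p > 0")
    case True
    then have "p \<in> nonconst_prime_factors P" using p by (simp add: nonconst_prime_factors_def)
    then have "p dvd squarefree_part P"
      unfolding squarefree_part_def by (intro dvd_prodI finite_nonconst_prime_factors) simp
    then show ?thesis using p_root by (rule slice_root_dvd)
  next
    case False
    text \<open>A constant factor vanishing at \<open>x\<close> would make the whole slice of \<open>P\<close> vanish.\<close>
    then have "degree (slice x p) = 0" using degree_slice_le[of x p] by simp
    then have "slice x p = [:poly (slice x p) y:]"
      by (metis degree_0_id poly_const_conv)
    then have "slice x p = 0" using p_root by simp
    moreover obtain H where "P = p * H" using p by (blast elim: dvdE intro: in_prime_factors_imp_dvd)
    ultimately show ?thesis using nonzero by (simp add: slice_mult)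
  qed
qed

lemma covering_space_by_graphs:
  fixes C :: "('a::topological_space \<times> 'b::topological_space) set"
  assumes surj: "fst ` C = U"
    and local: "\<And>x. x \<in> U \<Longrightarrow> \<exists>W \<V>. x \<in> W \<and> open W \<and> W \<subseteq> U \<and>
        C \<inter> fst -` W \<subseteq> W \<times> \<Union>\<V> \<and> pairwise disjnt \<V> \<and>
        (\<forall>V\<in>\<V>. open V \<and> (\<exists>g. continuous_on W g \<and> C \<inter> (W \<times> V) = (\<lambda>x. (x, g x)) ` W))"
  shows "covering_space C fst U"
proof
  show "continuous_on C fst" by (intro continuous_intros)
  show "fst ` C = U" by (rule surj)
  fix x assume "x \<in> U"
  then obtain W \<V> where x: "x \<in> W" and W: "open W" "W \<subseteq> U"
    and cover: "C \<inter> fst -` W \<subseteq> W \<times> \<Union>\<V>" and disj: "pairwise disjnt \<V>"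
    and sheets: "\<forall>V\<in>\<V>. open V \<and> (\<exists>g. continuous_on W g \<and> C \<inter> (W \<times> V) = (\<lambda>x. (x, g x)) ` W)"
    using local[OF \<open>x \<in> U\<close>] by (elim exE conjE) simp
  define \<U> where "\<U> = (\<lambda>V. C \<inter> (W \<times> V)) ` \<V>"
  have "\<Union>\<U> = C \<inter> fst -` W" using cover by (auto simp: \<U>_def)
  moreover have "\<forall>u\<in>\<U>. openin (top_of_set C) u"
    using sheets W by (auto simp: \<U>_def intro!: openin_open_Int open_Times)
  moreover have "pairwise disjnt \<U>"
    using disj by (fastforce simp: \<U>_def pairwise_def disjnt_def)
  moreover have "\<forall>u\<in>\<U>. \<exists>q. homeomorphism u W fst q"
  proof
    fix u assume "u \<in> \<U>"
    then obtain g where "continuous_on W g" and u: "u = (\<lambda>x. (x, g x)) ` W"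
      using sheets by (force simp: \<U>_def)
    then have "homeomorphism u W fst (\<lambda>x. (x, g x))"
      unfolding homeomorphism_def u by (auto intro!: continuous_intros simp: image_image)
    then show "\<exists>q. homeomorphism u W fst q" by blast
  qed
  moreover have "openin (top_of_set U) W" using W by (simp add: open_subset)
  ultimately show "\<exists>T. x \<in> T \<and> openin (top_of_set U) T \<and>
      (\<exists>\<U>. \<Union>\<U> = C \<inter> fst -` T \<and> (\<forall>u\<in>\<U>. openin (top_of_set C) u) \<and>
        pairwise disjnt \<U> \<and> (\<forall>u\<in>\<U>. \<exists>q. homeomorphism u T fst q))"
    using x by blast
qed

lemma finite_set_separated:
  fixes Z :: "'a::metric_space set"
  assumes "finite Z"
  obtains \<epsilon> where "\<epsilon> > 0" "\<And>z z'. z \<in> Z \<Longrightarrow> z' \<in> Z \<Longrightarrow> z \<noteq> z' \<Longrightarrow> 2 * \<epsilon> \<le> dist z z'"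
proof -
  define D where "D = insert 1 ((\<lambda>(z, z'). dist z z') ` {(z, z') \<in> Z \<times> Z. z \<noteq> z'})"
  have "finite {(z, z') \<in> Z \<times> Z. z \<noteq> z'}"
    by (rule finite_subset[of _ "Z \<times> Z"]) (use assms in auto)
  then have D: "finite D" "D \<noteq> {}" "\<And>d. d \<in> D \<Longrightarrow> d > 0"
    by (auto simp: D_def)
  have "Min D > 0" using D by simp
  moreover have "Min D \<le> dist z z'" if "z \<in> Z" "z' \<in> Z" "z \<noteq> z'" for z z'
    using D(1) that unfolding D_def by (intro Min_le) (auto intro!: image_eqI[of _ _ "(z, z')"])
  ultimately show thesis using that[of "Min D / 2"] by simp
qed

lemma disjoint_hitting_sets:
  assumes fin: "finite S" "finite Z" and card: "card S = card Z"
    and hit: "\<And>z. z \<in> Z \<Longrightarrow> B z \<inter> S \<noteq> {}"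
    and disj: "\<And>z z'. z \<in> Z \<Longrightarrow> z' \<in> Z \<Longrightarrow> z \<noteq> z' \<Longrightarrow> B z \<inter> B z' = {}"
  shows "S \<subseteq> (\<Union>z\<in>Z. B z)" and "\<And>z. z \<in> Z \<Longrightarrow> \<exists>!w. w \<in> S \<inter> B z"
proof -
  define g where "g z = (SOME w. w \<in> B z \<inter> S)" for z
  have g: "g z \<in> B z \<inter> S" if "z \<in> Z" for z
    unfolding g_def by (rule someI_ex) (use hit[OF that] in blast)
  have "inj_on g Z"
  proof (rule inj_onI)
    fix z z' assume z: "z \<in> Z" "z' \<in> Z" "g z = g z'"
    then have "g z \<in> B z \<inter> B z'" using g by (metis IntD1 IntI)
    then show "z = z'" using disj[OF z(1,2)] by blast
  qed
  then have "card (g ` Z) = card S" using card by (simp add: card_image)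
  then have image: "g ` Z = S" using g fin by (intro card_subset_eq) auto
  then show "S \<subseteq> (\<Union>z\<in>Z. B z)" using g by blast
  have "w = g z" if zw: "z \<in> Z" "w \<in> S \<inter> B z" for z w
  proof -
    obtain z' where "z' \<in> Z" "w = g z'" using image zw by blast
    then show ?thesis using g disj zw by blast
  qed
  then show "\<exists>!w. w \<in> S \<inter> B z" if "z \<in> Z" for z
    using g[OF that] that by (intro ex1I[of _ "g z"]) auto
qed

lemma isolated_root_branch_continuous:
  fixes Q :: "complex poly poly"
  assumes W: "open W" and V: "open V" and lc: "\<And>x. x \<in> W \<Longrightarrow> poly (lead_coeff Q) x \<noteq> 0"
    and branch: "\<And>x. x \<in> W \<Longrightarrow> g x \<in> V \<and> poly (slice x Q) (g x) = 0"
    and unique: "\<And>x w. x \<in> W \<Longrightarrow> w \<in> V \<Longrightarrow> poly (slice x Q) w = 0 \<Longrightarrow> w = g x"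
  shows "continuous_on W g"
  unfolding continuous_on_eq_continuous_at[OF W]
proof
  fix x0 assume x0: "x0 \<in> W"
  have "(g \<longlongrightarrow> g x0) (nhds x0)"
  proof (rule tendstoI)
    fix e :: real assume e: "e > 0"
    obtain r where r: "r > 0" "ball (g x0) r \<subseteq> V"
      using V branch[OF x0] by (meson openE)
    have "\<forall>\<^sub>F x in nhds x0. \<exists>w. dist w (g x0) < min e r \<and> poly (slice x Q) w = 0"
      using e r branch[OF x0] by (intro roots_continuous lc x0) auto
    moreover have "\<forall>\<^sub>F x in nhds x0. x \<in> W" using W x0 by (rule eventually_nhds_in_open)
    ultimately show "\<forall>\<^sub>F x in nhds x0. dist (g x) (g x0) < e"
    proof eventually_elim
      case (elim x)
      then obtain w where w: "dist w (g x0) < min e r" "poly (slice x Q) w = 0" by blast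
      then have "w \<in> V" using r by (auto simp: dist_commute)
      then show ?case using unique[OF elim(2) _ w(2)] w by simp
    qed
  qed
  then show "isCont g x0" unfolding isCont_def by (rule tendsto_at_iff_tendsto_nhds[THEN iffD2])
qed

lemma balls_disjoint:
  fixes z z' :: "'a::metric_space"
  assumes "2 * \<epsilon> \<le> dist z z'"
  shows "ball z \<epsilon> \<inter> ball z' \<epsilon> = {}"
  using assms dist_triangle_less_add[of z _ \<epsilon> z' \<epsilon>] by (force simp: dist_commute)

lemma local_root_branches:
  fixes R :: "complex poly poly"
  assumes U: "open U" "x0 \<in> U"
    and lc: "\<And>x. x \<in> U \<Longrightarrow> poly (lead_coeff R) x \<noteq> 0"
    and card: "\<And>x. x \<in> U \<Longrightarrow> card {y. poly (slice x R) y = 0} = degree R"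
    and Z: "Z = {y. poly (slice x0 R) y = 0}"
    and \<epsilon>: "\<epsilon> > 0" "\<And>z z'. z \<in> Z \<Longrightarrow> z' \<in> Z \<Longrightarrow> z \<noteq> z' \<Longrightarrow> 2 * \<epsilon> \<le> dist z z'"
  obtains W where "open W" "x0 \<in> W" "W \<subseteq> U"
    and "\<And>x. x \<in> W \<Longrightarrow> {y. poly (slice x R) y = 0} \<subseteq> (\<Union>z\<in>Z. ball z \<epsilon>)"
    and "\<And>x z. x \<in> W \<Longrightarrow> z \<in> Z \<Longrightarrow> \<exists>!w. w \<in> {y. poly (slice x R) y = 0} \<inter> ball z \<epsilon>"
proof -
  have finZ: "finite Z" unfolding Z by (intro poly_roots_finite slice_nonzero lc U)
  have "\<forall>\<^sub>F x in nhds x0. x \<in> U \<and> (\<forall>z\<in>Z. \<exists>w. dist w z < \<epsilon> \<and> poly (slice x R) w = 0)"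
    using U finZ \<epsilon> by (intro eventually_conj eventually_nhds_in_open eventually_ball_finite ballI
        roots_continuous lc) (auto simp: Z)
  then obtain W where W: "open W" "x0 \<in> W"
    and near: "\<And>x. x \<in> W \<Longrightarrow> x \<in> U \<and> (\<forall>z\<in>Z. \<exists>w. dist w z < \<epsilon> \<and> poly (slice x R) w = 0)"
    unfolding eventually_nhds by blast
  have disj: "ball z \<epsilon> \<inter> ball z' \<epsilon> = {}" if "z \<in> Z" "z' \<in> Z" "z \<noteq> z'" for z z'
    using \<epsilon>(2)[OF that] by (rule balls_disjoint)
  have counting: "{y. poly (slice x R) y = 0} \<subseteq> (\<Union>z\<in>Z. ball z \<epsilon>) \<and>
      (\<forall>z\<in>Z. \<exists>!w. w \<in> {y. poly (slice x R) y = 0} \<inter> ball z \<epsilon>)" if x: "x \<in> W" for x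
  proof -
    have "x \<in> U" using near[OF x] by blast
    have fin: "finite {y. poly (slice x R) y = 0}"
      by (intro poly_roots_finite slice_nonzero lc \<open>x \<in> U\<close>)
    have same_card: "card {y. poly (slice x R) y = 0} = card Z"
      using card[OF \<open>x \<in> U\<close>] card[OF U(2)] Z by simp
    have meets: "ball z \<epsilon> \<inter> {y. poly (slice x R) y = 0} \<noteq> {}" if z: "z \<in> Z" for z
    proof -
      obtain w where "dist w z < \<epsilon>" "poly (slice x R) w = 0" using near[OF x] z by blast
      then have "w \<in> ball z \<epsilon> \<inter> {y. poly (slice x R) y = 0}" by (simp add: dist_commute)
      then show ?thesis by blast
    qed
    show ?thesis
    proof (intro conjI ballI)
      show "{y. poly (slice x R) y = 0} \<subseteq> (\<Union>z\<in>Z. ball z \<epsilon>)"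
        by (rule disjoint_hitting_sets(1)[where B = "\<lambda>z. ball z \<epsilon>"])
          (simp_all add: fin finZ same_card meets disj)
      show "\<exists>!w. w \<in> {y. poly (slice x R) y = 0} \<inter> ball z \<epsilon>" if "z \<in> Z" for z
        by (rule disjoint_hitting_sets(2)[where S = "{y. poly (slice x R) y = 0}" and Z = Z
              and B = "\<lambda>z. ball z \<epsilon>"]) (simp_all add: fin finZ same_card meets disj that)
    qed
  qed
  show thesis
  proof (rule that[OF W])
    show "W \<subseteq> U" using near by blast
    show "{y. poly (slice x R) y = 0} \<subseteq> (\<Union>z\<in>Z. ball z \<epsilon>)" if "x \<in> W" for x
      using counting[OF that] by (rule conjunct1)
    show "\<exists>!w. w \<in> {y. poly (slice x R) y = 0} \<inter> ball z \<epsilon>" if "x \<in> W" "z \<in> Z" for x z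
      by (rule bspec[OF conjunct2[OF counting[OF that(1)]] that(2)])
  qed
qed

text \<open>Over an open set where the slices of \<open>R\<close> have the generic number \<open>degree R > 0\<close>
  of roots, the zero set of \<open>R\<close> is a covering space: locally it is the union of the
  graphs of the continuous root branches.\<close>
lemma covering_space_simple_roots:
  fixes R :: "complex poly poly" and U :: "complex set"
  assumes U: "open U" and lc: "\<And>x. x \<in> U \<Longrightarrow> poly (lead_coeff R) x \<noteq> 0"
    and card: "\<And>x. x \<in> U \<Longrightarrow> card {y. poly (slice x R) y = 0} = degree R"
    and deg: "degree R > 0"
  shows "covering_space {z. fst z \<in> U \<and> poly (slice (fst z) R) (snd z) = 0} fst U"
    (is "covering_space ?C fst U")
proof (rule covering_space_by_graphs)
  show "fst ` ?C = U"
  proof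
    show "U \<subseteq> fst ` ?C"
    proof
      fix x assume x: "x \<in> U"
      have "{y. poly (slice x R) y = 0} \<noteq> {}"
      proof
        assume "{y. poly (slice x R) y = 0} = {}"
        then show False using card[OF x] deg by simp
      qed
      then obtain y where "poly (slice x R) y = 0" by blast
      then show "x \<in> fst ` ?C" using x by (force intro: image_eqI[of _ _ "(x, y)"])
    qed
  qed auto
  fix x0 assume x0: "x0 \<in> U"
  define Z where "Z = {y. poly (slice x0 R) y = 0}"
  have "finite Z" unfolding Z_def by (intro poly_roots_finite slice_nonzero lc x0)
  then obtain \<epsilon> where \<epsilon>: "\<epsilon> > 0" "\<And>z z'. z \<in> Z \<Longrightarrow> z' \<in> Z \<Longrightarrow> z \<noteq> z' \<Longrightarrow> 2 * \<epsilon> \<le> dist z z'"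
    by (rule finite_set_separated) auto
  obtain W where W: "open W" "x0 \<in> W" "W \<subseteq> U"
    and cover: "\<And>x. x \<in> W \<Longrightarrow> {y. poly (slice x R) y = 0} \<subseteq> (\<Union>z\<in>Z. ball z \<epsilon>)"
    and unique: "\<And>x z. x \<in> W \<Longrightarrow> z \<in> Z \<Longrightarrow> \<exists>!w. w \<in> {y. poly (slice x R) y = 0} \<inter> ball z \<epsilon>"
    by (rule local_root_branches[OF U x0 lc card Z_def \<epsilon>]) auto
  define g where "g z x = (THE w. w \<in> {y. poly (slice x R) y = 0} \<inter> ball z \<epsilon>)" for z x
  have "g z x \<in> {y. poly (slice x R) y = 0} \<inter> ball z \<epsilon>" if "x \<in> W" "z \<in> Z" for x z
    unfolding g_def using unique[OF that] by (rule theI')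
  then have g: "g z x \<in> ball z \<epsilon> \<and> poly (slice x R) (g z x) = 0" if "x \<in> W" "z \<in> Z" for x z
    using that by blast
  have g_unique: "w = g z x"
    if "x \<in> W" "z \<in> Z" "w \<in> ball z \<epsilon>" "poly (slice x R) w = 0" for x z w
    using unique[OF that(1,2)] g[OF that(1,2)] that(3,4) by blast
  have graph: "?C \<inter> (W \<times> ball z \<epsilon>) = (\<lambda>x. (x, g z x)) ` W" if "z \<in> Z" for z
    using g g_unique that W(3) by fastforce
  have "continuous_on W (g z)" if "z \<in> Z" for z
    by (rule isolated_root_branch_continuous[OF W(1) open_ball]) (use W(3) lc g g_unique that in auto)
  moreover have "?C \<inter> fst -` W \<subseteq> W \<times> \<Union>((\<lambda>z. ball z \<epsilon>) ` Z)" using cover by force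
  moreover have "pairwise disjnt ((\<lambda>z. ball z \<epsilon>) ` Z)"
    unfolding pairwise_def disjnt_def using balls_disjoint \<epsilon>(2) by fastforce
  ultimately show "\<exists>W \<V>. x0 \<in> W \<and> open W \<and> W \<subseteq> U \<and> ?C \<inter> fst -` W \<subseteq> W \<times> \<Union>\<V> \<and>
      pairwise disjnt \<V> \<and> (\<forall>V\<in>\<V>. open V \<and> (\<exists>g. continuous_on W g \<and> ?C \<inter> (W \<times> V) = (\<lambda>x. (x, g x)) ` W))"
    using W graph by (intro exI[of _ W] exI[of _ "(\<lambda>z. ball z \<epsilon>) ` Z"]) blast
qed

definition poly_curve :: "complex poly poly \<Rightarrow> (complex \<times> complex) set" where
  "poly_curve P = {(x, y). x \<noteq> 0 \<and> y \<noteq> 0 \<and> poly (slice x P) y = 0}"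

lemma slice_root_nonzero:
  assumes "poly (coeff P 0) x \<noteq> 0" "poly (slice x P) y = 0"
  shows "y \<noteq> 0"
  using assms by (auto simp: poly_0_coeff_0)

text \<open>Properness: preimages of compact subsets of \<open>\<complex>\<^sup>*\<close> are compact, because over them
  the curve stays in an annulus \<open>\<eta> \<le> \<bar>y\<bar> \<le> M\<close>.\<close>
lemma poly_curve_proper:
  fixes P :: "complex poly poly"
  assumes lc: "\<And>x. x \<noteq> 0 \<Longrightarrow> poly (lead_coeff P) x \<noteq> 0"
    and c0: "\<And>x. x \<noteq> 0 \<Longrightarrow> poly (coeff P 0) x \<noteq> 0"
    and K: "K \<subseteq> - {0}" "compact K"
  shows "compact {z \<in> poly_curve P. fst z \<in> K}"
proof -
  obtain \<eta> M where \<eta>: "\<eta> > 0"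
    and annulus: "\<And>x y. x \<in> K \<Longrightarrow> poly (slice x P) y = 0 \<Longrightarrow> \<eta> \<le> norm y \<and> norm y \<le> M"
    using slice_roots_in_annulus[OF K(2), of P] lc c0 K(1) by blast
  have "{z \<in> poly_curve P. fst z \<in> K} =
      (K \<times> cball 0 M) \<inter> {z. poly (slice (fst z) P) (snd z) = 0} \<inter> {z. \<eta> \<le> norm (snd z)}"
    using annulus K(1) \<eta> by (fastforce simp: poly_curve_def)
  also have "compact \<dots>"
    by (intro compact_Int_closed compact_Times K(2) compact_cball closed_Collect_le
        closed_Collect_eq continuous_on_poly_slice continuous_intros)
  finally show ?thesis .
qed

lemma poly_curve_covering_off_finite:
  fixes P :: "complex poly poly"
  assumes deg: "degree P > 0"
    and lc: "\<And>x. x \<noteq> 0 \<Longrightarrow> poly (lead_coeff P) x \<noteq> 0"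
    and c0: "\<And>x. x \<noteq> 0 \<Longrightarrow> poly (coeff P 0) x \<noteq> 0"
  obtains D where "finite D" "D \<subseteq> - {0}" "covering_space (poly_curve P - fst -` D) fst (- {0} - D)"
proof -
  define R where "R = squarefree_part P"
  have degR: "degree R > 0" unfolding R_def by (rule degree_squarefree_part[OF deg])
  have res: "resultant R (pderiv R) \<noteq> 0"
    using squarefree_part_separable[of P] by (simp add: R_def resultant_0_gcd)
  have "pderiv R \<noteq> 0" using degR by (simp add: pderiv_eq_0_iff)
  define h where "h = resultant R (pderiv R) * lead_coeff R * lead_coeff (pderiv R)"
  have "h \<noteq> 0" using res degR \<open>pderiv R \<noteq> 0\<close> by (auto simp: h_def)
  define D where "D = {x. poly h x = 0} - {0}"
  have finD: "finite D" unfolding D_def using poly_roots_finite[OF \<open>h \<noteq> 0\<close>] by simp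
  define U where "U = - {0} - D"
  have "U = - insert 0 D" by (auto simp: U_def)
  then have "open U" using finD by (simp add: finite_imp_closed open_Compl)
  have good: "poly h x \<noteq> 0" if "x \<in> U" for x using that by (auto simp: U_def D_def)
  have cov: "covering_space {z. fst z \<in> U \<and> poly (slice (fst z) R) (snd z) = 0} fst U"
  proof (rule covering_space_simple_roots[OF \<open>open U\<close> _ _ degR])
    fix x assume "x \<in> U"
    then have hx: "poly h x \<noteq> 0" by (rule good)
    then show "poly (lead_coeff R) x \<noteq> 0" by (simp add: h_def)
    show "card {y. poly (slice x R) y = 0} = degree R"
      by (rule card_roots_slice) (use hx in \<open>simp_all add: h_def\<close>)
  qed
  have same_roots: "poly (slice x P) y = 0 \<longleftrightarrow> poly (slice x R) y = 0" if "x \<noteq> 0" for x y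
    unfolding R_def by (rule roots_slice_squarefree_part[OF slice_nonzero[OF lc[OF that]]])
  have "(x, y) \<in> poly_curve P - fst -` D \<longleftrightarrow> x \<in> U \<and> poly (slice x R) y = 0" for x y
  proof
    assume "(x, y) \<in> poly_curve P - fst -` D"
    then show "x \<in> U \<and> poly (slice x R) y = 0"
      using same_roots by (auto simp: poly_curve_def U_def)
  next
    assume xy: "x \<in> U \<and> poly (slice x R) y = 0"
    then have "x \<noteq> 0" "x \<notin> D" "poly (slice x P) y = 0" using same_roots by (auto simp: U_def)
    then show "(x, y) \<in> poly_curve P - fst -` D"
      using slice_root_nonzero[OF c0[OF \<open>x \<noteq> 0\<close>]] by (simp add: poly_curve_def)
  qed
  then have "z \<in> poly_curve P - fst -` D \<longleftrightarrow> z \<in> {z. fst z \<in> U \<and> poly (slice (fst z) R) (snd z) = 0}"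
    for z by (cases z) simp
  then have "poly_curve P - fst -` D = {z. fst z \<in> U \<and> poly (slice (fst z) R) (snd z) = 0}"
    by blast
  moreover have "D \<subseteq> - {0}" "- {0} - D = U" by (auto simp: D_def U_def)
  ultimately show thesis using that[OF finD] cov by simp
qed

theorem poly_curve_branched_covering:
  fixes P :: "complex poly poly"
  assumes deg: "degree P > 0"
    and lc: "\<And>x. x \<noteq> 0 \<Longrightarrow> poly (lead_coeff P) x \<noteq> 0"
    and c0: "\<And>x. x \<noteq> 0 \<Longrightarrow> poly (coeff P 0) x \<noteq> 0"
  shows "branched_covering (poly_curve P) fst (- {0})"
proof -
  obtain D where D: "finite D" "D \<subseteq> - {0}"
    and cov: "covering_space (poly_curve P - fst -` D) fst (- {0} - D)"
    by (rule poly_curve_covering_off_finite[OF deg lc c0]) auto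
  have "x \<in> fst ` poly_curve P" if x: "x \<noteq> 0" for x
  proof -
    have "degree (slice x P) > 0" using deg by (simp add: degree_slice[OF lc[OF x]])
    then obtain y where "poly (slice x P) y = 0" using alg_closed_imp_poly_has_root by blast
    then have "(x, y) \<in> poly_curve P" using x slice_root_nonzero[OF c0[OF x]] by (simp add: poly_curve_def)
    then show ?thesis by force
  qed
  then have surj: "fst ` poly_curve P = - {0}" by (auto simp: poly_curve_def)
  have fibres: "finite {z \<in> poly_curve P. fst z = t}" if "t \<in> - {0}" for t
  proof (rule finite_subset)
    show "{z \<in> poly_curve P. fst z = t} \<subseteq> Pair t ` {y. poly (slice t P) y = 0}"
      by (auto simp: poly_curve_def)
    show "finite (Pair t ` {y. poly (slice t P) y = 0})"
      using that by (intro finite_imageI poly_roots_finite slice_nonzero lc) simp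
  qed
  show ?thesis unfolding branched_covering_def
  proof (intro conjI allI impI ballI exI[of _ D])
    show "continuous_on (poly_curve P) fst" by (intro continuous_intros)
    show "fst ` poly_curve P = - {0}" by (rule surj)
    show "compact {z \<in> poly_curve P. fst z \<in> K}" if "K \<subseteq> - {0} \<and> compact K" for K
      using poly_curve_proper[OF lc c0] that by blast
    show "finite {z \<in> poly_curve P. fst z = t}" if "t \<in> - {0}" for t by (rule fibres[OF that])
    show "D sparse_in - {0}" using D(1) by (rule finite_imp_sparse)
  qed (use D cov in auto)
qed

lemma coeff_sum_monom_inj:
  fixes b :: "'i \<Rightarrow> 'a::comm_monoid_add"
  assumes "finite A" "inj_on idx A"
  shows "q \<in> A \<Longrightarrow> coeff (\<Sum>p\<in>A. monom (b p) (idx p)) (idx q) = b q"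
    and "j \<notin> idx ` A \<Longrightarrow> coeff (\<Sum>p\<in>A. monom (b p) (idx p)) j = 0"
proof -
  have coeff: "coeff (\<Sum>p\<in>A. monom (b p) (idx p)) j = (\<Sum>p\<in>A. if idx p = j then b p else 0)" for j
    by (simp add: coeff_sum coeff_monom)
  show "coeff (\<Sum>p\<in>A. monom (b p) (idx p)) (idx q) = b q" if "q \<in> A"
  proof -
    have "(\<Sum>p\<in>A. if idx p = idx q then b p else 0) = (\<Sum>p\<in>A. if p = q then b p else 0)"
      using assms(2) that by (intro sum.cong refl) (auto dest: inj_onD)
    then show ?thesis using assms(1) that by (simp add: coeff)
  qed
  show "coeff (\<Sum>p\<in>A. monom (b p) (idx p)) j = 0" if "j \<notin> idx ` A"
    using that by (auto simp: coeff intro!: sum.neutral)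
qed

lemma degree_sum_monom_inj:
  fixes b :: "'i \<Rightarrow> 'a::comm_monoid_add"
  assumes A: "finite A" "inj_on idx A" and q: "q \<in> A" "b q \<noteq> 0"
    and max: "\<And>p. p \<in> A \<Longrightarrow> idx p \<le> idx q"
  shows "degree (\<Sum>p\<in>A. monom (b p) (idx p)) = idx q"
proof (rule antisym)
  have "coeff (\<Sum>p\<in>A. monom (b p) (idx p)) j = 0" if "idx q < j" for j
    using that max by (intro coeff_sum_monom_inj(2)[OF A, where b = b]) (force simp: not_le)
  then show "degree (\<Sum>p\<in>A. monom (b p) (idx p)) \<le> idx q" by (intro degree_le) auto
  show "idx q \<le> degree (\<Sum>p\<in>A. monom (b p) (idx p))"
    using coeff_sum_monom_inj(1)[OF A q(1), where b = b] q(2) by (intro le_degree) simp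
qed

text \<open>Let \<open>L(x,y) = \<Sum>\<^sub>p\<^sub>\<in>\<^sub>A c\<^sub>p x\<^bsup>a\<^sub>p\<^esup> y\<^bsup>e\<^sub>p\<^esup>\<close> be a Laurent polynomial with nonzero
  coefficients whose \<open>y\<close>-exponents \<open>e\<^sub>p\<close> are pairwise distinct and not all equal.
  Then \<open>x\<^bsup>-min a\<^esup> y\<^bsup>-min e\<^esup> L\<close> is a polynomial \<open>P\<close> in \<open>y\<close> of positive degree whose coefficients
  are single monomials in \<open>x\<close>; so its leading and constant coefficients do not vanish
  on \<open>\<complex>\<^sup>*\<close>, and on \<open>(\<complex>\<^sup>*)\<^sup>2\<close> it has the same zeros as \<open>L\<close>.\<close>
lemma laurent_clear_denominators:
  fixes A :: "'i set" and c :: "'i \<Rightarrow> complex" and a e :: "'i \<Rightarrow> int"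
  assumes A: "finite A" and inj: "inj_on e A" and c: "\<And>p. p \<in> A \<Longrightarrow> c p \<noteq> 0"
    and two: "p1 \<in> A" "p2 \<in> A" "e p1 \<noteq> e p2"
  obtains P :: "complex poly poly" where "degree P > 0"
    "\<And>x. x \<noteq> 0 \<Longrightarrow> poly (lead_coeff P) x \<noteq> 0"
    "\<And>x. x \<noteq> 0 \<Longrightarrow> poly (coeff P 0) x \<noteq> 0"
    "\<And>x y. x \<noteq> 0 \<Longrightarrow> y \<noteq> 0 \<Longrightarrow>
       (\<Sum>p\<in>A. c p * x powi a p * y powi e p) = 0 \<longleftrightarrow> poly (slice x P) y = 0"
proof -
  define amin where "amin = Min (a ` A)"
  define emin where "emin = Min (e ` A)"
  have "emin \<in> e ` A" unfolding emin_def using A two by (intro Min_in) auto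
  then obtain pmin where pmin: "pmin \<in> A" "e pmin = emin" by (metis imageE)
  have "Max (e ` A) \<in> e ` A" using A two by (intro Max_in) auto
  then obtain pmax where pmax: "pmax \<in> A" "e pmax = Max (e ` A)" by (metis imageE)
  define idx where "idx p = nat (e p - emin)" for p
  define xe where "xe p = nat (a p - amin)" for p
  have e_idx: "e p = int (idx p) + emin" and a_xe: "a p = int (xe p) + amin" if "p \<in> A" for p
    using A that by (simp_all add: idx_def xe_def emin_def amin_def)
  have idx_inj: "inj_on idx A" using inj by (auto simp: inj_on_def e_idx)
  define P :: "complex poly poly" where "P = (\<Sum>p\<in>A. monom (monom (c p) (xe p)) (idx p))"
  note coeff_P = coeff_sum_monom_inj(1)[OF A idx_inj, where b = "\<lambda>p. monom (c p) (xe p)", folded P_def]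
  have idx_max: "idx p \<le> idx pmax" if "p \<in> A" for p
  proof -
    have "e p \<le> e pmax" using A that pmax(2) by simp
    then show ?thesis by (simp add: idx_def nat_mono)
  qed
  have degP: "degree P = idx pmax"
    unfolding P_def using c[OF pmax(1)] idx_max
    by (intro degree_sum_monom_inj[OF A idx_inj pmax(1)]) simp_all
  have monom_nonzero: "poly (monom (c p) (xe p)) x \<noteq> 0" if "p \<in> A" "x \<noteq> 0" for p x
    using c that by (simp add: poly_monom)
  have "idx p1 \<noteq> idx p2" using two(3) e_idx[OF two(1)] e_idx[OF two(2)] by auto
  then have "idx p1 > 0 \<or> idx p2 > 0" by auto
  then have "idx pmax > 0" using idx_max[OF two(1)] idx_max[OF two(2)] by linarith
  have "idx pmin = 0" using pmin by (simp add: idx_def)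
  have poly_slice_P: "poly (slice x P) y = (\<Sum>p\<in>A. c p * x ^ xe p * y ^ idx p)" for x y
    by (simp add: P_def slice_sum slice_monom poly_sum poly_monom mult_ac)
  have factor: "(\<Sum>p\<in>A. c p * x powi a p * y powi e p) = (x powi amin * y powi emin) * poly (slice x P) y"
    if "x \<noteq> 0" "y \<noteq> 0" for x y
    unfolding poly_slice_P sum_distrib_left
    by (intro sum.cong refl) (simp add: e_idx a_xe that power_int_add mult_ac)
  show thesis
  proof (rule that[of P])
    show "degree P > 0" using \<open>idx pmax > 0\<close> by (simp add: degP)
    show "poly (lead_coeff P) x \<noteq> 0" if "x \<noteq> 0" for x
      using monom_nonzero[OF pmax(1) that] coeff_P[OF pmax(1)] by (simp add: degP)
    show "poly (coeff P 0) x \<noteq> 0" if "x \<noteq> 0" for x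
      using monom_nonzero[OF pmin(1) that] coeff_P[OF pmin(1)] \<open>idx pmin = 0\<close> by simp
    show "(\<Sum>p\<in>A. c p * x powi a p * y powi e p) = 0 \<longleftrightarrow> poly (slice x P) y = 0"
      if "x \<noteq> 0" "y \<noteq> 0" for x y
      using factor[OF that] that by simp
  qed
qed

definition mirror_coeff ::
  "nat \<Rightarrow> (nat \<Rightarrow> int) \<Rightarrow> (nat \<Rightarrow> int) \<Rightarrow> (nat \<Rightarrow> complex) \<Rightarrow> int \<times> int \<Rightarrow> complex" where
  "mirror_coeff k m n r p =
     (if p \<in> {(0,0),(1,0),(0,1)} then 1 else 0) + (\<Sum>i\<in>{i\<in>{1..k}. (m i, n i) = p}. r i)"

lemma framed_equation_expand:
  fixes X Y :: complex
  assumes X: "X \<noteq> 0" and Y: "Y \<noteq> 0"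
  shows "1 + X * Y powi (-f) + Y + (\<Sum>i=1..k. r i * (X * Y powi (-f)) powi (m i) * Y powi (n i)) =
    (\<Sum>p\<in>mirror_exponents k m n. mirror_coeff k m n r p * X powi fst p * Y powi (snd p - f * fst p))"
proof -
  define M where "M = mirror_exponents k m n"
  define B where "B = {(0::int, 0::int), (1, 0), (0, 1)}"
  define g where "g i = (m i, n i)" for i
  define mon where "mon p = X powi fst p * Y powi (snd p - f * fst p)" for p
  have finM: "finite M" by (simp add: M_def mirror_exponents_def)
  have BM: "B \<subseteq> M" and gM: "g ` {1..k} \<subseteq> M"
    by (auto simp: B_def g_def M_def mirror_exponents_def)
  have framed_monomial: "(X * Y powi (-f)) powi (m i) * Y powi (n i) = mon (g i)" for i
  proof -
    have "(X * Y powi (-f)) powi (m i) * Y powi (n i) = X powi m i * ((Y powi (-f)) powi (m i) * Y powi (n i))"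
      using X Y by (simp add: power_int_mult_distrib mult_ac)
    also have "(Y powi (-f)) powi (m i) = Y powi (-f * m i)" by (rule power_int_mult[symmetric])
    also have "Y powi (-f * m i) * Y powi (n i) = Y powi (n i - f * m i)"
      using Y by (simp add: power_int_add[symmetric])
    finally show ?thesis by (simp add: mon_def g_def mult_ac)
  qed
  have "mirror_coeff k m n r p * mon p =
      (if p \<in> B then mon p else 0) + (\<Sum>i\<in>{i\<in>{1..k}. g i = p}. r i * mon (g i))" for p
    unfolding mirror_coeff_def B_def[symmetric] g_def[symmetric]
    by (simp add: distrib_right sum_distrib_right)
  then have "(\<Sum>p\<in>M. mirror_coeff k m n r p * mon p) =
      (\<Sum>p\<in>M. if p \<in> B then mon p else 0) + (\<Sum>p\<in>M. \<Sum>i\<in>{i\<in>{1..k}. g i = p}. r i * mon (g i))"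
    by (simp add: sum.distrib)
  also have "(\<Sum>p\<in>M. if p \<in> B then mon p else 0) = (\<Sum>p\<in>B. mon p)"
    using finM BM by (simp add: sum.If_cases Int_absorb1)
  also have "(\<Sum>p\<in>M. \<Sum>i\<in>{i\<in>{1..k}. g i = p}. r i * mon (g i)) = (\<Sum>i=1..k. r i * mon (g i))"
    by (rule sum.group[OF _ finM gM]) simp
  also have "(\<Sum>p\<in>B. mon p) = 1 + X * Y powi (-f) + Y" by (simp add: B_def mon_def)
  finally show ?thesis by (simp add: M_def[symmetric] mon_def[symmetric] framed_monomial mult.assoc)
qed

text \<open>The framings \<open>f\<close> for which two exponents \<open>p \<noteq> q\<close> become equal after shearing,
  i.e. \<open>f\<close> is the slope of the segment \<open>pq\<close>.\<close>
definition framing_slopes :: "(int \<times> int) set \<Rightarrow> int set" where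
  "framing_slopes M = (\<lambda>(p, q). (snd p - snd q) div (fst p - fst q)) ` (M \<times> M)"

lemma finite_framing_slopes: "finite M \<Longrightarrow> finite (framing_slopes M)"
  by (simp add: framing_slopes_def)

lemma inj_on_shear:
  assumes "f \<notin> framing_slopes M"
  shows "inj_on (\<lambda>p. snd p - f * fst p) M"
proof (rule inj_onI)
  fix p q assume pq: "p \<in> M" "q \<in> M" "snd p - f * fst p = snd q - f * fst q"
  show "p = q"
  proof (cases "fst p = fst q")
    case True
    then show ?thesis using pq(3) by (simp add: prod_eq_iff)
  next
    case False
    have "snd p - snd q = f * (fst p - fst q)" using pq(3) by (simp add: algebra_simps)
    then have "f = (snd p - snd q) div (fst p - fst q)" using False by simp
    then have "f \<in> framing_slopes M" using pq(1,2) unfolding framing_slopes_def by force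
    then show ?thesis using assms by simp
  qed
qed

text \<open>Of the toric data only the
  presence of the monomials \<open>1\<close> and \<open>y\<close> with coefficient \<open>1\<close> is needed here: after
  shearing they still have distinct \<open>Y\<close>-exponents \<open>0\<close> and \<open>1\<close>.\<close>
lemma framed_curve_is_poly_curve:
  assumes toric: "toric_mirror_data k m n" and f: "f \<notin> framing_slopes (mirror_exponents k m n)"
  obtains P where "degree P > 0"
    "\<And>x. x \<noteq> 0 \<Longrightarrow> poly (lead_coeff P) x \<noteq> 0"
    "\<And>x. x \<noteq> 0 \<Longrightarrow> poly (coeff P 0) x \<noteq> 0"
    "framed_curve k m n r f = poly_curve P"
proof -
  define M where "M = mirror_exponents k m n"
  define A where "A = {p \<in> M. mirror_coeff k m n r p \<noteq> 0}"
  define e where "e p = snd p - f * fst p" for p :: "int \<times> int"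
  have base: "mirror_coeff k m n r p = 1" if "p \<in> {(0,0),(1,0),(0,1)}" for p
  proof -
    have none: "{i\<in>{1..k}. (m i, n i) = p} = {}"
      using toric that unfolding toric_mirror_data_def by blast
    show ?thesis using that unfolding mirror_coeff_def none by simp
  qed
  have A: "finite A" "(0, 0) \<in> A" "(0, 1) \<in> A"
    using base by (auto simp: A_def M_def mirror_exponents_def)
  have "inj_on e A"
    using inj_on_shear[OF f] unfolding e_def A_def M_def by (rule inj_on_subset) auto
  then obtain P where P: "degree P > 0"
    "\<And>x. x \<noteq> 0 \<Longrightarrow> poly (lead_coeff P) x \<noteq> 0"
    "\<And>x. x \<noteq> 0 \<Longrightarrow> poly (coeff P 0) x \<noteq> 0"
    and zeros: "\<And>x y. x \<noteq> 0 \<Longrightarrow> y \<noteq> 0 \<Longrightarrow>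
      (\<Sum>p\<in>A. mirror_coeff k m n r p * x powi fst p * y powi e p) = 0 \<longleftrightarrow> poly (slice x P) y = 0"
    by (rule laurent_clear_denominators[where a = fst and e = e, OF A(1) _ _ A(2,3)])
      (auto simp: A_def e_def)
  have same_zeros: "(1 + x * y powi (-f) + y + (\<Sum>i=1..k. r i * (x * y powi (-f)) powi (m i) * y powi (n i)) = 0)
      \<longleftrightarrow> poly (slice x P) y = 0" if "x \<noteq> 0" "y \<noteq> 0" for x y
  proof -
    have "(\<Sum>p\<in>M. mirror_coeff k m n r p * x powi fst p * y powi e p) =
        (\<Sum>p\<in>A. mirror_coeff k m n r p * x powi fst p * y powi e p)"
      unfolding A_def by (rule sum.mono_neutral_right) (auto simp: M_def mirror_exponents_def)
    then show ?thesis
      using framed_equation_expand[OF that] zeros[OF that] by (simp add: M_def e_def)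
  qed
  have "z \<in> framed_curve k m n r f \<longleftrightarrow> z \<in> poly_curve P" for z
    using same_zeros by (cases z) (auto simp: framed_curve_def poly_curve_def)
  then have "framed_curve k m n r f = poly_curve P" by blast
  with P show thesis by (rule that)
qed

theorem mainTheorem2:
  fixes k :: nat and m n :: "nat \<Rightarrow> int" and r :: "nat \<Rightarrow> complex"
  assumes "toric_mirror_data k m n"
  shows "finite {f :: int. \<not> branched_covering (framed_curve k m n r f) fst (- {0})}"
proof (rule finite_subset)
  show "finite (framing_slopes (mirror_exponents k m n))"
    by (simp add: finite_framing_slopes mirror_exponents_def)
  show "{f. \<not> branched_covering (framed_curve k m n r f) fst (- {0})}
      \<subseteq> framing_slopes (mirror_exponents k m n)"
  proof (rule subsetI, rule ccontr)
    fix f assume bad: "f \<in> {f. \<not> branched_covering (framed_curve k m n r f) fst (- {0})}"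
      and generic: "f \<notin> framing_slopes (mirror_exponents k m n)"
    obtain P where P: "degree P > 0"
      "\<And>x. x \<noteq> 0 \<Longrightarrow> poly (lead_coeff P) x \<noteq> 0" "\<And>x. x \<noteq> 0 \<Longrightarrow> poly (coeff P 0) x \<noteq> 0"
      and curve: "framed_curve k m n r f = poly_curve P"
      by (rule framed_curve_is_poly_curve[where r = r, OF assms generic]) auto
    have "branched_covering (poly_curve P) fst (- {0})"
      by (rule poly_curve_branched_covering[OF P])
    then show False using bad curve by simp
  qed
qed

end
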